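(* Let $\{(\iota_1,z_1^* ),\dots,(\iota_J,z_J^* )\}$ be minimally degenerate. Then: (1) $\ker A^*$ is one-dimensional and there is a unique $\vec{\mathfrak c}\in(0,\infty)^J$ with $|\vec{\mathfrak c}|=1$ and $\ker A^*=\mathbb{R}\vec{\mathfrak c}$; (2) $\big|\frac{\vec\ell}{|\vec\ell|}-\vec{\mathfrak c}\big|\simeq\frac{|A^*\vec\ell|}{|\vec\ell|}$ for every $0\ne\vec\ell\in[0,\infty)^J$; (3) for any $\delta_1>0$ and $\vec\lambda\in(0,\infty)^J$ with $\lambda_{\mathrm{max2}}\ge\delta_1\lambda_{\max}$, $\sum_{i=1}^J\lambda_i^{2D-2}(A^*\vec\lambda^D)_i^2\simeq_{\delta_1}\lambda_{\max}^{2D-2}|A^*\vec\lambda^D|^2$.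
   Context: $N\ge7$, $D=\frac{N-2}2$; $\iota_i\in\{\pm1\}$ and distinct $z_i^*\in\mathbb{R}^N$. $A^*_{ij}=\mathbf 1_{i\ne j}\kappa_0\kappa_\infty\frac{\iota_i\iota_j}{|z_i^*-z_j^*|^{N-2}}$ with fixed positive constants $\kappa_0,\kappa_\infty$. A configuration is degenerate if $A^*$ has a nonzero kernel element in $[0,\infty)^J$; minimally degenerate if it is degenerate while every proper sub-configuration of size $\ge2$ (using the corresponding submatrix) is non-degenerate. $\vec\lambda^D=(\lambda_i^D)_i$; $\lambda_{\max}$, $\lambda_{\mathrm{max2}}$ largest and second largest $\lambda_i$. Implicit constants depend on the configuration (and $\delta_1$ where indicated). *)

theory Defs
  imports "HOL-Analysis.Analysis"
begin

text \<open>Bubbles are indexed by a finite type 'j (so J = CARD('j)); points z_i live in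
  real^'n with N = CARD('n).\<close>

definition Astar :: "real \<Rightarrow> real \<Rightarrow> ('j::finite \<Rightarrow> real) \<Rightarrow> ('j \<Rightarrow> real^'n::finite)
    \<Rightarrow> real^'j^'j" where
  "Astar k0 kinf iota z = (\<chi> i j. if i = j then 0
      else k0 * kinf * iota i * iota j / (dist (z i) (z j)) ^ (CARD('n) - 2))"

text \<open>Degeneracy of the sub-configuration indexed by S (using the submatrix of A on S):
  the submatrix has a nonzero kernel element with nonnegative entries.\<close>
definition sub_degenerate :: "real^'j^'j \<Rightarrow> 'j::finite set \<Rightarrow> bool" where
  "sub_degenerate A S \<longleftrightarrow> (\<exists>c :: 'j \<Rightarrow> real. (\<forall>i\<in>S. c i \<ge> 0) \<and> (\<exists>i\<in>S. c i \<noteq> 0)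
      \<and> (\<forall>i\<in>S. (\<Sum>j\<in>S. A $ i $ j * c j) = 0))"

definition degenerate :: "real^'j^'j \<Rightarrow> bool" where
  "degenerate A \<longleftrightarrow> (\<exists>c :: real^'j::finite. c \<noteq> 0 \<and> (\<forall>i. c $ i \<ge> 0) \<and> A *v c = 0)"

definition minimally_degenerate :: "real^'j^'j \<Rightarrow> bool" where
  "minimally_degenerate A \<longleftrightarrow> degenerate A \<and>
     (\<forall>S :: 'j::finite set. S \<subset> UNIV \<and> card S \<ge> 2 \<longrightarrow> \<not> sub_degenerate A S)"

definition lmax :: "real^'j::finite \<Rightarrow> real" where
  "lmax l = Max (range (\<lambda>i. l $ i))"

text \<open>Second largest entry (counted with multiplicity): the largest entry after
  removing one index at which the maximum is attained.\<close>
definition lmax2 :: "real^'j::finite \<Rightarrow> real" where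
  "lmax2 l = Max ((\<lambda>i. l $ i) ` (UNIV - {SOME i. l $ i = lmax l}))"

definition vpowr :: "real^'j::finite \<Rightarrow> real \<Rightarrow> real^'j" where
  "vpowr l D = (\<chi> i. (l $ i) powr D)"

end

theory Submission
  imports Defs
begin

text \<open>Since the off-diagonal entries of A do not vanish, minimality forces every nonnegative
  kernel vector to have full support: its support would otherwise be a smaller degenerate
  sub-configuration or a single index, which A maps to a nonzero column. Subtracting from any
  kernel vector the largest multiple of a positive kernel vector c then leaves a nonnegative
  kernel vector with a zero entry, so the kernel is the line through c. For (2), A is bounded
  and, being injective on the orthogonal complement of c, coercive there; for a nonnegative unit
  vector u the distance to c is controlled by the component of u orthogonal to c.
  For (3) scale the largest entry of \<lambda> to 1. If all entries stay above a threshold the weights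
  are harmless. Otherwise a compactness argument applies, because the weighted sum can only vanish
  if A \<lambda>^D vanishes on the support of \<lambda>; as two entries are at least \<delta>1, minimality then
  puts \<lambda>^D into the kernel, i.e. makes it a multiple of c, which a small entry rules out.\<close>

lemma closed_Collect_ex_finite:
  assumes "\<And>i::'a::finite. closed {x. P i x}"
  shows "closed {x. \<exists>i. P i x}"
proof -
  have "{x. \<exists>i. P i x} = (\<Union>i. {x. P i x})" by auto
  then show ?thesis using assms by (simp add: closed_Union)
qed

lemma minimally_degenerate_full_support:
  fixes A :: "real^'j::finite^'j"
  assumes md: "minimally_degenerate A"
    and nonneg: "\<forall>k. 0 \<le> v$k"
    and balanced: "\<And>s. 0 < v$s \<Longrightarrow> (A *v v)$s = 0"
    and ij: "i \<noteq> j" "0 < v$i" "0 < v$j"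
  shows "0 < v$k"
proof -
  define S where "S = {s. 0 < v$s}"
  have "card {i, j} \<le> card S" using ij by (intro card_mono) (auto simp: S_def)
  then have card: "card S \<ge> 2" using ij by simp
  have restrict: "(\<Sum>t\<in>S. A$s$t * v$t) = (A *v v)$s" for s
    unfolding matrix_vector_mult_def
    by (simp, rule sum.mono_neutral_left) (use nonneg in \<open>auto simp: S_def less_eq_real_def\<close>)
  have "sub_degenerate A S"
    unfolding sub_degenerate_def
    using nonneg ij restrict balanced by (intro exI[of _ "\<lambda>t. v$t"]) (auto simp: S_def)
  then have "S = UNIV" using md card unfolding minimally_degenerate_def by blast
  then show ?thesis by (auto simp: S_def)
qed

lemma minimally_degenerate_kernel_pos:
  fixes A :: "real^'j::finite^'j"
  assumes offdiag: "\<And>i k. i \<noteq> k \<Longrightarrow> A$i$k \<noteq> 0"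
    and md: "minimally_degenerate A"
    and nonneg: "\<forall>k. 0 \<le> v$k" and "v \<noteq> 0" and kernel: "A *v v = 0"
  shows "0 < v$i"
proof -
  obtain k where k: "0 < v$k"
    using nonneg \<open>v \<noteq> 0\<close> by (metis less_eq_real_def vec_eq_iff zero_index)
  show ?thesis
  proof (cases "\<exists>j. j \<noteq> k \<and> 0 < v$j")
    case True
    then obtain j where "j \<noteq> k" "0 < v$j" by blast
    show ?thesis
      by (rule minimally_degenerate_full_support[OF md nonneg _ _ k \<open>0 < v$j\<close>])
        (use \<open>j \<noteq> k\<close> in \<open>auto simp: kernel\<close>)
  next
    case False
    then have "v$j = 0" if "j \<noteq> k" for j
      using nonneg that by (metis less_eq_real_def)
    then have "(A *v v)$i = A$i$k * v$k"
      unfolding matrix_vector_mult_def by (simp add: sum.remove[of _ k])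
    then show ?thesis using offdiag[of i k] k kernel by (cases "i = k") auto
  qed
qed

lemma minimally_degenerate_kernel_eq_line:
  fixes A :: "real^'j::finite^'j"
  assumes offdiag: "\<And>i k. i \<noteq> k \<Longrightarrow> A$i$k \<noteq> 0"
    and md: "minimally_degenerate A"
    and cpos: "\<forall>i. 0 < c$i" and Ac: "A *v c = 0"
  shows "{v. A *v v = 0} = range (\<lambda>t. t *\<^sub>R c)"
proof
  show "range (\<lambda>t. t *\<^sub>R c) \<subseteq> {v. A *v v = 0}"
    by (auto simp: matrix_vector_mult_scaleR Ac)
next
  show "{v. A *v v = 0} \<subseteq> range (\<lambda>t. t *\<^sub>R c)"
  proof
    fix w assume "w \<in> {v. A *v v = 0}"
    then have Aw: "A *v w = 0" by simp
    \<comment> \<open>w - t c is a nonnegative kernel vector with a zero entry, hence zero\<close>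
    define t where "t = Min (range (\<lambda>j. w$j / c$j))"
    have "t \<in> range (\<lambda>j. w$j / c$j)" unfolding t_def by (rule Min_in) auto
    then obtain k where k: "t = w$k / c$k" by auto
    define u where "u = w - t *\<^sub>R c"
    have "t \<le> w$j / c$j" for j unfolding t_def by (rule Min_le) auto
    then have "t * c$j \<le> w$j" for j using cpos by (simp add: pos_le_divide_eq)
    then have "\<forall>j. 0 \<le> u$j" by (simp add: u_def)
    moreover have "A *v u = 0" by (simp add: u_def algebra_simps Ac Aw)
    moreover have "\<not> 0 < u$k" using cpos[rule_format, of k] by (simp add: u_def k)
    ultimately have "u = 0" using minimally_degenerate_kernel_pos[OF offdiag md] by blast
    then show "w \<in> range (\<lambda>t. t *\<^sub>R c)" by (auto simp: u_def)
  qed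
qed

lemma minimally_degenerate_kernel_generator:
  fixes A :: "real^'j::finite^'j"
  assumes offdiag: "\<And>i k. i \<noteq> k \<Longrightarrow> A$i$k \<noteq> 0"
    and md: "minimally_degenerate A"
  obtains c where "\<forall>i. 0 < c$i" "norm c = 1" "{v. A *v v = 0} = range (\<lambda>t. t *\<^sub>R c)"
proof -
  obtain v :: "real^'j" where v: "v \<noteq> 0" "\<forall>i. 0 \<le> v$i" "A *v v = 0"
    using md unfolding minimally_degenerate_def degenerate_def by blast
  define c where "c = v /\<^sub>R norm v"
  have "\<forall>i. 0 < c$i"
    using minimally_degenerate_kernel_pos[OF offdiag md v(2,1,3)] v(1) by (simp add: c_def)
  moreover have "norm c = 1" using v(1) by (simp add: c_def)
  moreover have "A *v c = 0" by (simp add: c_def matrix_vector_mult_scaleR v(3))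
  ultimately show ?thesis
    using that minimally_degenerate_kernel_eq_line[OF offdiag md] by blast
qed

lemma positive_unit_generator_unique:
  fixes c c' :: "real^'j::finite"
  assumes c: "\<forall>i. 0 < c$i" "norm c = 1" and c': "\<forall>i. 0 < c'$i" "norm c' = 1"
    and same_line: "range (\<lambda>t. t *\<^sub>R c') = range (\<lambda>t. t *\<^sub>R c)"
  shows "c' = c"
proof -
  have "c' \<in> range (\<lambda>t. t *\<^sub>R c')" by (metis rangeI scaleR_one)
  then obtain t where t: "c' = t *\<^sub>R c" unfolding same_line by blast
  have "0 < t * c$i" for i using c'(1) by (simp add: t)
  then have "0 < t" using c(1) by (meson zero_less_mult_pos2)
  moreover have "\<bar>t\<bar> = 1" using c(2) c'(2) by (simp add: t)
  ultimately show ?thesis using t by simp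
qed

lemma norm_diff_le_twice_orthogonal_part:
  fixes u c :: "'a::real_inner"
  assumes "norm u = 1" "norm c = 1" "0 \<le> u \<bullet> c"
  shows "norm (u - c) \<le> 2 * norm (u - (u \<bullet> c) *\<^sub>R c)"
proof -
  define s where "s = u \<bullet> c"
  have uu: "u \<bullet> u = 1" and cc: "c \<bullet> c = 1" using assms(1,2) by (simp_all add: dot_square_norm)
  have "s \<le> 1" using norm_cauchy_schwarz[of u c] assms(1,2) by (simp add: s_def)
  have "(norm (u - c))\<^sup>2 = 2 * (1 - s)"
    unfolding power2_norm_eq_inner s_def using uu cc
    by (simp add: inner_diff_left inner_diff_right inner_commute)
  moreover have "(norm (u - s *\<^sub>R c))\<^sup>2 = (1 - s) * (1 + s)"
    unfolding power2_norm_eq_inner s_def using uu cc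
    by (simp add: inner_diff_left inner_diff_right inner_commute algebra_simps power2_eq_square)
  moreover have "2 * (1 - s) \<le> 4 * ((1 - s) * (1 + s))"
  proof -
    have "2 * (1 - s) * 1 \<le> 2 * (1 - s) * (2 * (1 + s))"
      using \<open>s \<le> 1\<close> assms(3) by (intro mult_left_mono) (simp_all add: s_def)
    then show ?thesis by (simp add: algebra_simps)
  qed
  ultimately have "(norm (u - c))\<^sup>2 \<le> (2 * norm (u - s *\<^sub>R c))\<^sup>2"
    by (simp add: power_mult_distrib)
  then show ?thesis unfolding s_def by (rule power2_le_imp_le) simp
qed

lemma unit_dist_kernel_generator_equiv:
  fixes A :: "real^'j::finite^'k::finite"
  assumes cnonneg: "\<forall>i. 0 \<le> c$i" and cnorm: "norm c = 1"
    and ker: "{v. A *v v = 0} = range (\<lambda>t. t *\<^sub>R c)"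
  shows "\<exists>C1 C2. C1 > 0 \<and> C2 > 0 \<and>
    (\<forall>l :: real^'j. l \<noteq> 0 \<and> (\<forall>i. l $ i \<ge> 0) \<longrightarrow>
       C1 * (norm (A *v l) / norm l) \<le> norm (l /\<^sub>R norm l - c)
     \<and> norm (l /\<^sub>R norm l - c) \<le> C2 * (norm (A *v l) / norm l))"
proof -
  have lin: "bounded_linear ((*v) A)" by (rule matrix_vector_mul_bounded_linear)
  obtain B where B: "B > 0" "\<And>x. norm (A *v x) \<le> norm x * B"
    using bounded_linear.pos_bounded[OF lin] by blast
  have "\<forall>w\<in>{w. w \<bullet> c = 0}. A *v w = 0 \<longrightarrow> w = 0"
    using ker by (force simp: inner_commute)
  then obtain \<sigma> where \<sigma>: "\<sigma> > 0" "\<And>w. w \<bullet> c = 0 \<Longrightarrow> \<sigma> * norm w \<le> norm (A *v w)"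
    using injective_imp_isometric[OF closed_subspace[OF subspace_hyperplane2] subspace_hyperplane2 lin] by blast
  have Ac: "A *v c = 0" using ker by (metis (mono_tags) mem_Collect_eq rangeI scaleR_one)
  have "1 / B * (norm (A *v l) / norm l) \<le> norm (l /\<^sub>R norm l - c)
      \<and> norm (l /\<^sub>R norm l - c) \<le> 2 / \<sigma> * (norm (A *v l) / norm l)"
    if l: "l \<noteq> 0 \<and> (\<forall>i. l $ i \<ge> 0)" for l :: "real^'j"
  proof
    define u where "u = l /\<^sub>R norm l"
    have Au: "norm (A *v u) = norm (A *v l) / norm l"
      by (simp add: u_def matrix_vector_mult_scaleR divide_inverse_commute)
    have "A *v (u - c) = A *v u" by (simp add: algebra_simps Ac)
    then have "norm (A *v l) / norm l \<le> norm (u - c) * B" using B(2)[of "u - c"] Au by simp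
    then have "norm (A *v l) / norm l / B \<le> norm (u - c)" by (simp only: pos_divide_le_eq[OF B(1)])
    then show "1 / B * (norm (A *v l) / norm l) \<le> norm (l /\<^sub>R norm l - c)"
      by (simp add: u_def mult.commute)
    define w where "w = u - (u \<bullet> c) *\<^sub>R c"
    have "0 \<le> u \<bullet> c"
      using l cnonneg by (simp add: u_def inner_vec_def sum_nonneg)
    then have "norm (u - c) \<le> 2 * norm w"
      unfolding w_def using l cnorm by (intro norm_diff_le_twice_orthogonal_part) (simp_all add: u_def)
    also have "\<dots> \<le> 2 / \<sigma> * norm (A *v w)"
      using \<sigma>(2)[of w] \<sigma>(1) cnorm by (simp add: w_def inner_diff_left dot_square_norm field_simps)
    also have "A *v w = A *v u" by (simp add: w_def algebra_simps Ac)
    finally have "norm (u - c) \<le> 2 / \<sigma> * (norm (A *v l) / norm l)" by (simp only: Au)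
    then show "norm (l /\<^sub>R norm l - c) \<le> 2 / \<sigma> * (norm (A *v l) / norm l)"
      by (simp only: u_def)
  qed
  then show ?thesis using B(1) \<sigma>(1) by (intro exI[of _ "1/B"] exI[of _ "2/\<sigma>"]) auto
qed

definition weighted_residual :: "real^'j::finite^'j \<Rightarrow> real \<Rightarrow> real \<Rightarrow> real^'j \<Rightarrow> real" where
  "weighted_residual A p D l = (\<Sum>i\<in>UNIV. (l $ i) powr p * ((A *v vpowr l D) $ i)\<^sup>2)"

lemma lmax_ge: "l $ i \<le> lmax l"
  unfolding lmax_def by (rule Max_ge) auto

lemma lmax_lmax2_attained:
  fixes l :: "real^'j::finite"
  assumes "(a::'j) \<noteq> b"
  shows "\<exists>i j. i \<noteq> j \<and> l $ i = lmax l \<and> l $ j = lmax2 l"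
proof -
  have "lmax l \<in> range (\<lambda>i. l $ i)" unfolding lmax_def by (rule Max_in) auto
  then have "\<exists>i. l $ i = lmax l" by auto
  define i where "i = (SOME i. l $ i = lmax l)"
  have li: "l $ i = lmax l" unfolding i_def by (rule someI_ex) fact
  have "UNIV - {i} \<noteq> {}" using assms by (metis DiffI UNIV_I empty_iff singletonD)
  then have "lmax2 l \<in> (\<lambda>j. l $ j) ` (UNIV - {i})"
    unfolding lmax2_def i_def[symmetric] by (intro Max_in) auto
  then obtain j where "lmax2 l = l $ j" "j \<in> UNIV - {i}" by (rule imageE)
  then show ?thesis using li by (intro exI[of _ i] exI[of _ j]) auto
qed

lemma vpowr_scaleR:
  assumes "L > 0" "\<forall>k. 0 \<le> l $ k"
  shows "vpowr (L *\<^sub>R l) D = (L powr D) *\<^sub>R vpowr l D"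
  using assms unfolding vpowr_def by (simp add: vec_eq_iff powr_mult)

lemma continuous_on_vpowr:
  assumes "D > 0"
  shows "continuous_on {l. \<forall>k. 0 \<le> l $ k} (\<lambda>l::real^'j::finite. vpowr l D)"
  unfolding vpowr_def
  by (intro continuous_on_vec_lambda continuous_on_powr' continuous_on_component
      continuous_on_id continuous_on_const) (use assms in auto)

lemma weighted_residual_le_lmax:
  assumes "\<forall>k. 0 \<le> l $ k" "0 \<le> p"
  shows "weighted_residual A p D l \<le> lmax l powr p * (norm (A *v vpowr l D))\<^sup>2"
proof -
  have "weighted_residual A p D l \<le> (\<Sum>i\<in>UNIV. lmax l powr p * ((A *v vpowr l D) $ i)\<^sup>2)"
    unfolding weighted_residual_def using assms lmax_ge
    by (intro sum_mono mult_right_mono powr_mono2) auto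
  also have "\<dots> = lmax l powr p * (norm (A *v vpowr l D))\<^sup>2"
    unfolding power2_norm_eq_inner inner_vec_def by (simp add: sum_distrib_left power2_eq_square)
  finally show ?thesis .
qed

lemma weighted_residual_ge_lower_weight:
  assumes "\<forall>k. e \<le> l $ k" "0 < e" "0 \<le> p"
  shows "e powr p * (norm (A *v vpowr l D))\<^sup>2 \<le> weighted_residual A p D l"
proof -
  have "e powr p * (norm (A *v vpowr l D))\<^sup>2 = (\<Sum>i\<in>UNIV. e powr p * ((A *v vpowr l D) $ i)\<^sup>2)"
    unfolding power2_norm_eq_inner inner_vec_def by (simp add: sum_distrib_left power2_eq_square)
  also have "\<dots> \<le> weighted_residual A p D l"
    unfolding weighted_residual_def using assms
    by (intro sum_mono mult_right_mono powr_mono2) auto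
  finally show ?thesis .
qed

lemma weighted_residual_scaleR:
  assumes "L > 0" "\<forall>k. 0 \<le> l $ k"
  shows "weighted_residual A p D (L *\<^sub>R l) = L powr p * (L powr D)\<^sup>2 * weighted_residual A p D l"
  unfolding weighted_residual_def vpowr_scaleR[OF assms] sum_distrib_left
  using assms by (intro sum.cong) (auto simp: matrix_vector_mult_scaleR powr_mult power_mult_distrib)

lemma compact_continuous_ratio_bound:
  fixes F G :: "'a::topological_space \<Rightarrow> real"
  assumes "compact K" "continuous_on K F" "continuous_on K G" "\<forall>x\<in>K. 0 < F x"
  obtains C where "C > 0" "\<forall>x\<in>K. C * G x \<le> F x"
proof (cases "K = {}")
  case True
  then show ?thesis using that[of 1] by simp
next
  case False
  obtain x1 where x1: "x1 \<in> K" "\<forall>x\<in>K. F x1 \<le> F x"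
    using continuous_attains_inf[OF assms(1) False assms(2)] by blast
  obtain x2 where x2: "\<forall>x\<in>K. G x \<le> G x2"
    using continuous_attains_sup[OF assms(1) False assms(3)] by blast
  define C where "C = F x1 / (\<bar>G x2\<bar> + 1)"
  have "C > 0" using x1 assms(4) by (simp add: C_def)
  moreover have "C * G x \<le> F x" if "x \<in> K" for x
  proof -
    have "C * G x \<le> C * (\<bar>G x2\<bar> + 1)"
      using x2 that \<open>C > 0\<close> by (intro mult_left_mono) force+
    also have "\<dots> = F x1" by (simp add: C_def)
    also have "\<dots> \<le> F x" using x1(2) that by blast
    finally show ?thesis .
  qed
  ultimately show ?thesis using that by blast
qed

lemma minimally_degenerate_residual_nonzero:
  fixes A :: "real^'j::finite^'j"
  assumes md: "minimally_degenerate A"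
    and cpos: "\<forall>i. 0 < c$i" and cnorm: "norm c = 1"
    and ker: "{v. A *v v = 0} = range (\<lambda>t. t *\<^sub>R c)"
    and nonneg: "\<forall>k. 0 \<le> v$k" and vi: "v$i = 1" and vj: "j \<noteq> i" "0 < v$j"
    and small: "v$k < c$k"
  shows "\<exists>s. 0 < v$s \<and> (A *v v)$s \<noteq> 0"
proof (rule ccontr)
  assume "\<not> ?thesis"
  then have balanced: "(A *v v)$s = 0" if "0 < v$s" for s using that by blast
  have "0 < v$s" for s
    using minimally_degenerate_full_support[OF md nonneg balanced vj(1)[symmetric]] vi vj(2) by simp
  then have "A *v v = 0" using balanced by (simp add: vec_eq_iff)
  then obtain t where t: "v = t *\<^sub>R c" using ker by blast
  have ci: "0 < c$i" "c$i \<le> 1"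
    using cpos component_le_norm_cart[of c i] cnorm by auto
  have "1 \<le> t"
  proof (rule ccontr)
    assume "\<not> 1 \<le> t"
    then have "t * c$i < 1 * c$i" using ci by (intro mult_strict_right_mono) auto
    moreover have "t * c$i = 1" using vi by (simp add: t)
    ultimately show False using ci(2) by linarith
  qed
  then have "1 * c$k \<le> t * c$k" using cpos by (intro mult_right_mono) (auto simp: less_imp_le)
  then show False using small by (simp add: t)
qed

lemma weighted_residual_pos:
  fixes A :: "real^'j::finite^'j"
  assumes md: "minimally_degenerate A"
    and cpos: "\<forall>i. 0 < c$i" and cnorm: "norm c = 1"
    and ker: "{v. A *v v = 0} = range (\<lambda>t. t *\<^sub>R c)"
    and l: "\<forall>k. 0 \<le> l$k" "l$i = 1" "j \<noteq> i" "0 < l$j" and small: "l$k powr D < c$k"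
  shows "0 < weighted_residual A p D l"
proof -
  obtain s where s: "0 < vpowr l D $ s" "(A *v vpowr l D) $ s \<noteq> 0"
    using minimally_degenerate_residual_nonzero[OF md cpos cnorm ker, of "vpowr l D" i j k] l small
    by (auto simp: vpowr_def)
  then have "0 < l$s" using l(1) by (auto simp: vpowr_def less_eq_real_def)
  then show ?thesis
    unfolding weighted_residual_def using s by (intro sum_pos2[of _ s]) auto
qed

lemma weighted_residual_lower_bound_normalized:
  fixes A :: "real^'j::finite^'j"
  assumes md: "minimally_degenerate A"
    and cpos: "\<forall>i. 0 < c$i" and cnorm: "norm c = 1"
    and ker: "{v. A *v v = 0} = range (\<lambda>t. t *\<^sub>R c)"
    and p: "p > 0" and D: "D > 0" and \<delta>: "\<delta> > 0"
  obtains C where "C > 0"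
    "\<And>l i j. \<forall>k. 0 \<le> l$k \<and> l$k \<le> 1 \<Longrightarrow> l$i = 1 \<Longrightarrow> j \<noteq> i \<Longrightarrow> \<delta> \<le> l$j \<Longrightarrow>
      C * (norm (A *v vpowr l D))\<^sup>2 \<le> weighted_residual A p D l"
proof -
  define F where "F = weighted_residual A p D"
  define G where "G = (\<lambda>l. (norm (A *v vpowr l D))\<^sup>2)"
  define m where "m = Min (range (\<lambda>k. c$k))"
  have "m \<in> range (\<lambda>k. c$k)" unfolding m_def by (rule Min_in) auto
  then have m: "0 < m" using cpos by auto
  have m_le: "m \<le> c$k" for k unfolding m_def by (rule Min_le) auto
  \<comment> \<open>below level e an entry of l^D is too small for l^D to be a multiple of c\<close>
  define e where "e = (m/2) powr (1/D)"
  have e: "0 < e" "e powr D = m/2" using m D by (simp_all add: e_def powr_powr)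
  define K where "K = {l::real^'j. (\<forall>k. 0 \<le> l$k \<and> l$k \<le> 1)
    \<and> (\<exists>i j. j \<noteq> i \<and> l$i = 1 \<and> \<delta> \<le> l$j) \<and> (\<exists>k. l$k \<le> e)}"
  have nonneg_K: "K \<subseteq> {l. \<forall>k. 0 \<le> l$k}" by (auto simp: K_def)
  have "K \<subseteq> cbox (vec 0) (vec 1)" by (auto simp: K_def mem_box_cart)
  then have "bounded K" by (rule bounded_subset[OF bounded_cbox])
  moreover have "closed K" unfolding K_def
    by (intro closed_Collect_conj closed_Collect_all closed_Collect_ex_finite closed_Collect_le
        closed_Collect_eq closed_Collect_imp open_Collect_neg closed_Collect_const
        continuous_on_component continuous_on_id continuous_on_const)
  ultimately have "compact K" by (simp add: compact_eq_bounded_closed)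
  have cont_Av: "continuous_on K (\<lambda>l. A *v vpowr l D)"
    by (rule continuous_on_compose2[OF linear_continuous_on[OF matrix_vector_mul_bounded_linear]
        continuous_on_subset[OF continuous_on_vpowr[OF D] nonneg_K]]) auto
  have "continuous_on K F" unfolding F_def weighted_residual_def
    by (intro continuous_on_sum continuous_on_mult continuous_on_power continuous_on_component cont_Av
        continuous_on_powr' continuous_on_id continuous_on_const) (use nonneg_K p in auto)
  moreover have "continuous_on K G" unfolding G_def
    by (intro continuous_on_power continuous_on_norm cont_Av)
  moreover have "\<forall>l\<in>K. 0 < F l"
  proof
    fix l assume "l \<in> K"
    then obtain i j k where l: "\<forall>k. 0 \<le> l$k \<and> l$k \<le> 1" "l$i = 1" "j \<noteq> i" "\<delta> \<le> l$j" "l$k \<le> e"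
      unfolding K_def by blast
    have "l$k powr D \<le> e powr D" using l(1,5) D by (intro powr_mono2) auto
    also have "\<dots> < c$k" using e(2) m m_le[of k] by simp
    finally show "0 < F l"
      unfolding F_def using l \<delta> by (intro weighted_residual_pos[OF md cpos cnorm ker]) auto
  qed
  ultimately obtain C0 where C0: "C0 > 0" "\<forall>l\<in>K. C0 * G l \<le> F l"
    using compact_continuous_ratio_bound[OF \<open>compact K\<close>] by blast
  define C where "C = min (e powr p) C0"
  have "C * G l \<le> F l" if l: "\<forall>k. 0 \<le> l$k \<and> l$k \<le> 1" "l$i = 1" "j \<noteq> i" "\<delta> \<le> l$j" for l i j
  proof (cases "\<exists>k. l$k \<le> e")
    case True
    then have "l \<in> K" using l unfolding K_def by blast
    have "C * G l \<le> C0 * G l" unfolding C_def G_def by (intro mult_right_mono) auto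
    also have "\<dots> \<le> F l" using C0(2) \<open>l \<in> K\<close> by blast
    finally show ?thesis .
  next
    case False
    have "C * G l \<le> e powr p * G l" unfolding C_def G_def by (intro mult_right_mono) auto
    also have "\<dots> \<le> F l"
      unfolding F_def G_def using False e(1) p
      by (intro weighted_residual_ge_lower_weight) (auto simp: not_le less_imp_le)
    finally show ?thesis .
  qed
  moreover have "C > 0" using e(1) C0(1) by (simp add: C_def)
  ultimately show ?thesis using that unfolding F_def G_def by blast
qed

lemma weighted_residual_lower_bound:
  fixes A :: "real^'j::finite^'j"
  assumes md: "minimally_degenerate A"
    and cpos: "\<forall>i. 0 < c$i" and cnorm: "norm c = 1"
    and ker: "{v. A *v v = 0} = range (\<lambda>t. t *\<^sub>R c)"
    and p: "p > 0" and D: "D > 0" and \<delta>: "\<delta> > 0"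
  obtains C where "C > 0"
    "\<And>l. \<forall>i. 0 < l$i \<Longrightarrow> \<delta> * lmax l \<le> lmax2 l \<Longrightarrow>
      C * (lmax l powr p * (norm (A *v vpowr l D))\<^sup>2) \<le> weighted_residual A p D l"
proof -
  obtain C where C: "C > 0"
    "\<And>l i j. \<forall>k. 0 \<le> l$k \<and> l$k \<le> 1 \<Longrightarrow> l$i = 1 \<Longrightarrow> j \<noteq> i \<Longrightarrow> \<delta> \<le> l$j \<Longrightarrow>
      C * (norm (A *v vpowr l D))\<^sup>2 \<le> weighted_residual A p D l"
    using weighted_residual_lower_bound_normalized[OF md cpos cnorm ker p D \<delta>] by blast
  have "C * (lmax l powr p * (norm (A *v vpowr l D))\<^sup>2) \<le> weighted_residual A p D l"
    if l: "\<forall>i. 0 < l$i" "\<delta> * lmax l \<le> lmax2 l" for l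
  proof (cases "\<exists>a b::'j. a \<noteq> b")
    case False
    \<comment> \<open>with a single index lmax2 is junk; instead A vanishes, as every vector is a multiple of c\<close>
    have "A *v v = 0" for v
    proof -
      have "v = (v$k / c$k) *\<^sub>R c" for k
        unfolding vec_eq_iff
      proof
        fix i :: 'j
        have "i = k" using False by blast
        then show "v$i = ((v$k / c$k) *\<^sub>R c)$i" using cpos[rule_format, of k] by simp
      qed
      then show ?thesis using ker by blast
    qed
    then show ?thesis by (simp add: weighted_residual_def)
  next
    case True
    then obtain i j where ij: "i \<noteq> j" "l$i = lmax l" "l$j = lmax2 l"
      using lmax_lmax2_attained by blast
    define L where "L = lmax l"
    have L: "0 < L" using l(1) ij(2) by (metis L_def)
    define l' where "l' = (1/L) *\<^sub>R l"
    have scale: "l = L *\<^sub>R l'" and l'_nonneg: "\<forall>k. 0 \<le> l'$k"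
      using L l(1) by (auto simp: l'_def less_imp_le)
    have "l'$k \<le> 1" for k using lmax_ge[of l k] L by (simp add: l'_def L_def)
    moreover have "l'$i = 1" using ij(2) L by (simp add: l'_def L_def)
    moreover have "\<delta> \<le> l'$j" using ij(3) l(2) L by (simp add: l'_def L_def pos_le_divide_eq)
    ultimately have "C * (norm (A *v vpowr l' D))\<^sup>2 \<le> weighted_residual A p D l'"
      using C(2) ij(1) l'_nonneg by (metis (no_types))
    then have "L powr p * (L powr D)\<^sup>2 * (C * (norm (A *v vpowr l' D))\<^sup>2)
        \<le> L powr p * (L powr D)\<^sup>2 * weighted_residual A p D l'"
      by (rule mult_left_mono) simp
    also have "\<dots> = weighted_residual A p D l"
      by (simp only: scale weighted_residual_scaleR[OF L l'_nonneg])
    finally have "L powr p * (L powr D)\<^sup>2 * (C * (norm (A *v vpowr l' D))\<^sup>2)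
        \<le> weighted_residual A p D l" .
    moreover have "norm (A *v vpowr l D) = L powr D * norm (A *v vpowr l' D)"
      by (simp add: scale vpowr_scaleR[OF L l'_nonneg] matrix_vector_mult_scaleR)
    ultimately show ?thesis by (simp add: L_def power_mult_distrib algebra_simps)
  qed
  then show ?thesis using that C(1) by blast
qed

lemma weighted_residual_equiv_lmax:
  fixes A :: "real^'j::finite^'j"
  assumes md: "minimally_degenerate A"
    and c: "\<forall>i. 0 < c$i" "norm c = 1"
    and ker: "{v. A *v v = 0} = range (\<lambda>t. t *\<^sub>R c)"
    and p: "p > 0" and D: "D > 0"
  shows "\<forall>\<delta> > 0. \<exists>C1 C2. C1 > 0 \<and> C2 > 0 \<and>
    (\<forall>l :: real^'j. (\<forall>i. l $ i > 0) \<and> lmax2 l \<ge> \<delta> * lmax l \<longrightarrow>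
       C1 * (lmax l powr p * (norm (A *v vpowr l D))\<^sup>2) \<le> weighted_residual A p D l
     \<and> weighted_residual A p D l \<le> C2 * (lmax l powr p * (norm (A *v vpowr l D))\<^sup>2))"
proof (intro allI impI)
  fix \<delta> :: real assume "\<delta> > 0"
  then obtain C where "C > 0" "\<And>l. \<forall>i. 0 < l$i \<Longrightarrow> \<delta> * lmax l \<le> lmax2 l \<Longrightarrow>
      C * (lmax l powr p * (norm (A *v vpowr l D))\<^sup>2) \<le> weighted_residual A p D l"
    using weighted_residual_lower_bound[OF md c ker p D] by blast
  moreover have "weighted_residual A p D l \<le> 1 * (lmax l powr p * (norm (A *v vpowr l D))\<^sup>2)"
    if "\<forall>i. 0 < l$i" for l
    using weighted_residual_le_lmax[of l p] that p by (simp add: less_imp_le)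
  ultimately show "\<exists>C1 C2. C1 > 0 \<and> C2 > 0 \<and>
    (\<forall>l :: real^'j. (\<forall>i. l $ i > 0) \<and> lmax2 l \<ge> \<delta> * lmax l \<longrightarrow>
       C1 * (lmax l powr p * (norm (A *v vpowr l D))\<^sup>2) \<le> weighted_residual A p D l
     \<and> weighted_residual A p D l \<le> C2 * (lmax l powr p * (norm (A *v vpowr l D))\<^sup>2))"
    by (intro exI[of _ C] exI[of _ 1]) auto
qed

theorem lemma4p5:
  fixes k0 kinf :: real
    and iota :: "'j::finite \<Rightarrow> real"
    and z :: "'j \<Rightarrow> real^'n::finite"
  defines "A \<equiv> Astar k0 kinf iota z"
    and "D \<equiv> (real CARD('n) - 2) / 2"
  assumes N7: "CARD('n) \<ge> 7"
    and k0: "k0 > 0" and kinf: "kinf > 0"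
    and iota: "\<And>i. iota i \<in> {-1, 1}"
    and distinct: "inj z"
    and mindeg: "minimally_degenerate A"
  shows "dim {v :: real^'j. A *v v = 0} = 1
    \<and> (\<exists>!c :: real^'j. (\<forall>i. c $ i > 0) \<and> norm c = 1
          \<and> {v. A *v v = 0} = range (\<lambda>t. t *\<^sub>R c))
    \<and> (\<forall>c :: real^'j. ((\<forall>i. c $ i > 0) \<and> norm c = 1
          \<and> {v. A *v v = 0} = range (\<lambda>t. t *\<^sub>R c)) \<longrightarrow>
        (\<exists>C1 C2. C1 > 0 \<and> C2 > 0 \<and>
          (\<forall>l :: real^'j. l \<noteq> 0 \<and> (\<forall>i. l $ i \<ge> 0) \<longrightarrow>
             C1 * (norm (A *v l) / norm l) \<le> norm (l /\<^sub>R norm l - c)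
           \<and> norm (l /\<^sub>R norm l - c) \<le> C2 * (norm (A *v l) / norm l))))
    \<and> (\<forall>\<delta>1 > 0. \<exists>C1 C2. C1 > 0 \<and> C2 > 0 \<and>
        (\<forall>l :: real^'j. (\<forall>i. l $ i > 0) \<and> lmax2 l \<ge> \<delta>1 * lmax l \<longrightarrow>
           C1 * (lmax l powr (2*D - 2) * (norm (A *v vpowr l D))\<^sup>2)
             \<le> (\<Sum>i\<in>UNIV. (l $ i) powr (2*D - 2) * ((A *v vpowr l D) $ i)\<^sup>2)
         \<and> (\<Sum>i\<in>UNIV. (l $ i) powr (2*D - 2) * ((A *v vpowr l D) $ i)\<^sup>2)
             \<le> C2 * (lmax l powr (2*D - 2) * (norm (A *v vpowr l D))\<^sup>2)))"
proof -
  have offdiag: "A$i$k \<noteq> 0" if "i \<noteq> k" for i k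
    using that injD[OF distinct, of i k] iota[of i] iota[of k] k0 kinf
    by (auto simp: A_def Astar_def)
  obtain c where c: "\<forall>i. 0 < c$i" "norm c = 1" and ker: "{v. A *v v = 0} = range (\<lambda>t. t *\<^sub>R c)"
    using minimally_degenerate_kernel_generator[OF offdiag mindeg] by blast
  have D: "2*D - 2 > 0" "D > 0" using N7 by (auto simp: D_def)
  have "dim {v :: real^'j. A *v v = 0} = 1"
    using c(2) by (auto simp: ker span_singleton[symmetric])
  moreover have "\<exists>!c :: real^'j. (\<forall>i. c $ i > 0) \<and> norm c = 1
      \<and> {v. A *v v = 0} = range (\<lambda>t. t *\<^sub>R c)"
    using c ker positive_unit_generator_unique[OF c] by (intro ex1I[of _ c]) auto
  moreover have "\<forall>c :: real^'j. ((\<forall>i. c $ i > 0) \<and> norm c = 1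
          \<and> {v. A *v v = 0} = range (\<lambda>t. t *\<^sub>R c)) \<longrightarrow>
        (\<exists>C1 C2. C1 > 0 \<and> C2 > 0 \<and>
          (\<forall>l :: real^'j. l \<noteq> 0 \<and> (\<forall>i. l $ i \<ge> 0) \<longrightarrow>
             C1 * (norm (A *v l) / norm l) \<le> norm (l /\<^sub>R norm l - c)
           \<and> norm (l /\<^sub>R norm l - c) \<le> C2 * (norm (A *v l) / norm l)))"
    by (metis unit_dist_kernel_generator_equiv less_imp_le)
  moreover note weighted_residual_equiv_lmax[OF mindeg c ker D]
  ultimately show ?thesis unfolding weighted_residual_def by blast
qed

end
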